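(* Let $q$ be a prime power, let $0\le t\le q^2-2$ with $q$-adic expression $t=b_0+b_1q$ ($0\le b_0,b_1\le q-1$), let $\Delta=\{0,1,\ldots,t\}$ and let $E=D_\Delta\subseteq\mathbb{F}_{q^2}^{q^2}$ be the corresponding (extended) Reed–Solomon code obtained by evaluating at all elements of $\mathbb{F}_{q^2}$. Then the EAQECC associated with $E$ (Hermitian construction) has parameters $$[[q^2,\,(q-b_1)^2-2b_0-2,\,t+2;\,b_1^2]]_q$$ when $b_0+b_1<q-1$, and parameters $$[[q^2,\,(q-b_1-1)^2,\,t+2;\,b_1^2+2(b_0+b_1-q)+3]]_q$$ otherwise (i.e. when $b_0+b_1\ge q-1$).
   Context: Let $P_1,\dots,P_{q^2}$ be all the elements of $\mathbb{F}_{q^2}$ (the roots of $X^{q^2}-X$). For $\Delta\subseteq\{0,1,\ldots,q^2-2\}$, $D_\Delta$ is the $\mathbb{F}_{q^2}$-linear code spanned by the vectors $(P_1^i,\dots,P_{q^2}^i)$, $i\in\Delta$ (with $0^0=1$). The Hermitian inner product on $\mathbb{F}_{q^2}^N$ is $x\cdot y=\sum_{i} x_iy_i^q$. For a linear code $E\subseteq\mathbb{F}_{q^2}^N$ of dimension $k$ whose Hermitian dual $C$ has minimum distance $d$, the associated EAQECC is an entanglement-assisted quantum error-correcting code over $\mathbb{F}_q$ with parameters $[[N,\,N-2k+c,\,d;\,c]]_q$, where $c=\dim E-\dim(E\cap C)$. *)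

theory Defs
  imports Complex_Main "HOL-Computational_Algebra.Primes" "HOL-Library.Function_Algebras"
begin

text \<open>Vectors of length q^2 are indexed by the elements of the field itself:
  the coordinate at P is the value at P. The field 'a plays the role of F_{q^2}.\<close>

definition fscale :: "'a::field \<Rightarrow> ('a \<Rightarrow> 'a) \<Rightarrow> ('a \<Rightarrow> 'a)" where
  "fscale c f = (\<lambda>x. c * f x)"

definition code_dim :: "('a::field \<Rightarrow> 'a) set \<Rightarrow> nat" where
  "code_dim V = vector_space.dim fscale V"

text \<open>D_Delta: span of the evaluation vectors (P^i)_P, i in Delta (0^0 = 1 in Isabelle).\<close>
definition D_code :: "nat set \<Rightarrow> ('a::{finite,field} \<Rightarrow> 'a) set" where
  "D_code \<Delta> = module.span fscale ((\<lambda>i. (\<lambda>P. P ^ i)) ` \<Delta>)"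

definition herm_ip :: "nat \<Rightarrow> ('a::{finite,field} \<Rightarrow> 'a) \<Rightarrow> ('a \<Rightarrow> 'a) \<Rightarrow> 'a" where
  "herm_ip q x y = (\<Sum>P\<in>UNIV. x P * (y P) ^ q)"

definition herm_dual :: "nat \<Rightarrow> ('a::{finite,field} \<Rightarrow> 'a) set \<Rightarrow> ('a \<Rightarrow> 'a) set" where
  "herm_dual q E = {y. \<forall>x\<in>E. herm_ip q x y = 0}"

definition hamming_wt :: "('a::{finite,field} \<Rightarrow> 'a) \<Rightarrow> nat" where
  "hamming_wt y = card {P. y P \<noteq> 0}"

definition min_dist :: "('a::{finite,field} \<Rightarrow> 'a) set \<Rightarrow> nat" where
  "min_dist C = Min (hamming_wt ` (C - {0}))"

text \<open>Parameters [[N, N - 2k + c, d; c]]_q of the EAQECC associated with E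
  (Hermitian construction), where k = dim E, C = Hermitian dual of E, d = d(C),
  c = dim E - dim (E \<inter> C).\<close>
definition eaqecc_params :: "nat \<Rightarrow> ('a::{finite,field} \<Rightarrow> 'a) set \<Rightarrow> nat \<times> int \<times> nat \<times> nat" where
  "eaqecc_params q E =
    (let N = card (UNIV :: 'a set); k = code_dim E; C = herm_dual q E;
         c = code_dim E - code_dim (E \<inter> C)
     in (N, int N - 2 * int k + int c, min_dist C, c))"

definition prime_power :: "nat \<Rightarrow> bool" where
  "prime_power q \<longleftrightarrow> (\<exists>p n. prime p \<and> n > 0 \<and> q = p ^ n)"

end

theory Submission
  imports Defs "HOL-Number_Theory.Residues" "HOL-Computational_Algebra.Polynomial"
begin

text \<open>
  Over a field with N = q^2 elements, E = D_{0..t} consists of the polynomial functions of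
  degree at most t, and the monomial functions x^i, i < N, are linearly independent, so
  dim E = t + 1. Everything else rests on the power sums: the sum of x^k over the field is -1
  if k > 0 and N - 1 divides k, and 0 otherwise.

  The Hermitian dual of E has minimum distance t + 2: a dual word of weight at most t + 1 is
  not orthogonal to a polynomial of degree at most t that vanishes on all but one point of
  its support, while g^q, for g a polynomial with N - 2 - t prescribed roots, is a dual word of
  weight t + 2.

  For the hull, the Hermitian product of x^j with x^i is the power sum of exponent j + i q,
  and i q is congruent modulo N - 1 to the number obtained by swapping the two base-q digits
  of i. Hence a combination of the x^i, i \<le> t, lies in the dual exactly when the
  coefficients with t + swap(i) \<ge> N - 1 vanish. The hull is therefore spanned by the
  remaining monomials, and c counts the digit pairs of the indices i \<le> t with
  t + swap(i) \<ge> N - 1. These pairs form a lexicographic window that splits into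
  four rectangles.
\<close>

lemma two_le_CARD_field: "2 \<le> card (UNIV :: 'a::{finite,field} set)"
proof -
  have "card {0::'a, 1} \<le> card (UNIV :: 'a set)"
    by (rule card_mono) auto
  thus ?thesis by simp
qed

lemma of_nat_CARD_eq_0: "of_nat (card (UNIV :: 'a::{finite,field} set)) = (0::'a)"
  using CHAR_dvd_CARD[where 'a='a] of_nat_eq_0_iff_char_dvd by blast

lemma prime_CHAR_finite_field: "prime CHAR('a::{finite,field})"
  by (rule prime_CHAR_semidom) (simp add: finite_imp_CHAR_pos)

lemma power_CARD_minus_one:
  fixes x :: "'a::{finite,field}"
  assumes "x \<noteq> 0"
  shows "x ^ (card (UNIV :: 'a set) - 1) = 1"
proof -
  let ?U = "UNIV - {0::'a}"
  have "(\<Prod>y\<in>?U. x * y) = (\<Prod>y\<in>?U. y)"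
    by (rule prod.reindex_bij_witness[of _ "\<lambda>y. y / x" "\<lambda>y. x * y"]) (use assms in auto)
  moreover have "(\<Prod>y\<in>?U. x * y) = x ^ (card (UNIV :: 'a set) - 1) * (\<Prod>y\<in>?U. y)"
    by (simp add: prod.distrib card_Diff_singleton)
  moreover have "(\<Prod>y\<in>?U. y) \<noteq> 0"
    by simp
  ultimately show ?thesis
    by simp
qed

lemma power_CARD:
  fixes x :: "'a::{finite,field}"
  shows "x ^ card (UNIV :: 'a set) = x"
proof -
  have "card (UNIV :: 'a set) = Suc (card (UNIV :: 'a set) - 1)"
    using two_le_CARD_field[where 'a='a] by simp
  then show ?thesis
    by (cases "x = 0") (metis power_0_Suc, metis power_Suc power_CARD_minus_one mult_1_right)
qed

lemma power_add_mult_CARD_minus_one: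
  fixes x :: "'a::{finite,field}"
  assumes "0 < k"
  shows "x ^ (k + m * (card (UNIV :: 'a set) - 1)) = x ^ k"
proof (cases "x = 0")
  case False
  have "x ^ (m * (card (UNIV :: 'a set) - 1)) = 1"
    by (metis mult.commute power_mult power_CARD_minus_one[OF False] power_one)
  then show ?thesis
    by (simp add: power_add)
qed (use assms in \<open>simp add: power_0_left\<close>)

lemma exists_power_ne_one:
  assumes "\<not> (card (UNIV :: 'a::{finite,field} set) - 1) dvd k"
  shows "\<exists>a::'a. a \<noteq> 0 \<and> a ^ k \<noteq> 1"
proof -
  define r where "r = k mod (card (UNIV :: 'a set) - 1)"
  have r: "0 < r" "r < card (UNIV :: 'a set) - 1"
    using assms two_le_CARD_field[where 'a='a] by (auto simp: r_def dvd_eq_mod_eq_0)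
  define p :: "'a poly" where "p = monom 1 r - 1"
  have "p \<noteq> 0"
    using r by (auto simp: p_def poly_eq_iff)
  moreover have "degree p \<le> r"
    unfolding p_def by (rule degree_diff_le) (auto simp: degree_monom_le)
  moreover have "{x. poly p x = 0} = {x. x ^ r = 1}"
    by (auto simp: p_def poly_monom)
  ultimately have "card {x::'a. x ^ r = 1} \<le> r"
    using card_poly_roots_bound[of p] by simp
  hence "\<not> UNIV - {0} \<subseteq> {x::'a. x ^ r = 1}"
    using r card_mono[of "{x::'a. x ^ r = 1}" "UNIV - {0}"] by (auto simp: card_Diff_singleton)
  then obtain a :: 'a where a: "a \<noteq> 0" "a ^ r \<noteq> 1"
    by blast
  have "k = r + k div (card (UNIV :: 'a set) - 1) * (card (UNIV :: 'a set) - 1)"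
    by (simp only: r_def mod_div_mult_eq)
  hence "a ^ k = a ^ r"
    by (metis power_add_mult_CARD_minus_one r(1))
  with a show ?thesis
    by auto
qed

lemma sum_powers:
  "(\<Sum>x\<in>UNIV. (x::'a::{finite,field}) ^ k) =
     (if 0 < k \<and> (card (UNIV :: 'a set) - 1) dvd k then -1 else 0)"
proof -
  let ?N = "card (UNIV :: 'a set)"
  consider "k = 0" | "0 < k" "(?N - 1) dvd k" | "\<not> (?N - 1) dvd k"
    by blast
  then show ?thesis
  proof cases
    case 1
    then show ?thesis
      using of_nat_CARD_eq_0[where 'a='a] by simp
  next
    case 2
    have "(\<Sum>x\<in>UNIV. x ^ k) = (\<Sum>x\<in>UNIV - {0::'a}. x ^ k)"
      using 2 by (intro sum.mono_neutral_right) auto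
    also have "\<dots> = (\<Sum>x\<in>UNIV - {0::'a}. 1)"
    proof (rule sum.cong)
      fix x :: 'a assume "x \<in> UNIV - {0}"
      then have "x ^ (?N - 1) = 1"
        using power_CARD_minus_one by blast
      moreover obtain r where "k = (?N - 1) * r"
        using 2 by blast
      ultimately show "x ^ k = 1"
        by (metis power_mult power_one)
    qed simp
    also have "\<dots> = of_nat ?N - 1"
      using two_le_CARD_field[where 'a='a] by (simp add: card_Diff_singleton of_nat_diff)
    finally show ?thesis
      using 2 of_nat_CARD_eq_0[where 'a='a] by simp
  next
    case 3
    then obtain a :: 'a where a: "a \<noteq> 0" "a ^ k \<noteq> 1"
      using exists_power_ne_one by blast
    let ?S = "\<Sum>x\<in>UNIV. (x::'a) ^ k"
    have "?S = (\<Sum>x\<in>UNIV. (a * x) ^ k)"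
      by (rule sum.reindex_bij_witness[of _ "\<lambda>y. a * y" "\<lambda>y. y / a"]) (use a in auto)
    also have "\<dots> = a ^ k * ?S"
      by (simp add: power_mult_distrib sum_distrib_left)
    finally have "(a ^ k - 1) * ?S = 0"
      by (simp add: algebra_simps)
    with a(2) have "?S = 0"
      by simp
    with 3 show ?thesis
      by simp
  qed
qed

lemma sum_powers_less:
  assumes "k < 2 * (card (UNIV :: 'a::{finite,field} set) - 1)"
  shows "(\<Sum>x\<in>UNIV. (x::'a) ^ k) = (if k = card (UNIV :: 'a set) - 1 then -1 else 0)"
proof -
  have "0 < k \<and> (card (UNIV :: 'a set) - 1) dvd k \<longleftrightarrow> k = card (UNIV :: 'a set) - 1"
    using assms two_le_CARD_field[where 'a='a]
    by (auto elim!: dvdE simp: less_2_cases_iff)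
  then show ?thesis
    by (simp add: sum_powers)
qed

interpretation fs: vector_space "fscale :: 'a::field \<Rightarrow> ('a \<Rightarrow> 'a) \<Rightarrow> 'a \<Rightarrow> 'a"
  by unfold_locales (auto simp: fscale_def fun_eq_iff algebra_simps)

lemma sum_fun_apply: "(\<Sum>i\<in>A. f i) x = (\<Sum>i\<in>A. f i x)"
  by (induction A rule: infinite_finite_induct) auto

definition monomial_comb :: "(nat \<Rightarrow> 'a::field) \<Rightarrow> nat set \<Rightarrow> 'a \<Rightarrow> 'a" where
  "monomial_comb c A = (\<lambda>x. \<Sum>i\<in>A. c i * x ^ i)"

lemma monomial_comb_eq_sum: "monomial_comb c A = (\<Sum>i\<in>A. fscale (c i) (\<lambda>x. x ^ i))"
  by (simp add: monomial_comb_def fun_eq_iff sum_fun_apply fscale_def)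

lemma span_monomials:
  assumes "finite A"
  shows "fs.span ((\<lambda>i x. x ^ i) ` A) = range (\<lambda>c. monomial_comb c A :: 'a::field \<Rightarrow> 'a)"
proof
  have "fs.subspace (range (\<lambda>c. monomial_comb c A :: 'a \<Rightarrow> 'a))"
    unfolding fs.subspace_def
  proof (intro conjI ballI allI)
    show "0 \<in> range (\<lambda>c. monomial_comb c A)"
      by (rule range_eqI[of _ _ "\<lambda>_. 0"]) (simp add: monomial_comb_def fun_eq_iff)
  next
    fix u v :: "'a \<Rightarrow> 'a"
    assume "u \<in> range (\<lambda>c. monomial_comb c A)" "v \<in> range (\<lambda>c. monomial_comb c A)"
    then obtain c d where "u = monomial_comb c A" "v = monomial_comb d A"
      by blast
    then show "u + v \<in> range (\<lambda>c. monomial_comb c A)"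
      by (intro range_eqI[of _ _ "\<lambda>i. c i + d i"])
        (simp add: monomial_comb_def fun_eq_iff sum.distrib algebra_simps)
  next
    fix r and u :: "'a \<Rightarrow> 'a" assume "u \<in> range (\<lambda>c. monomial_comb c A)"
    then obtain c where "u = monomial_comb c A"
      by blast
    then show "fscale r u \<in> range (\<lambda>c. monomial_comb c A)"
      by (intro range_eqI[of _ _ "\<lambda>i. r * c i"])
        (simp add: monomial_comb_def fscale_def fun_eq_iff sum_distrib_left mult.assoc)
  qed
  moreover have "(\<lambda>x::'a. x ^ i) = monomial_comb (\<lambda>k. of_bool (k = i)) A" if "i \<in> A" for i
    using that assms by (simp add: monomial_comb_def fun_eq_iff)
  ultimately show "fs.span ((\<lambda>i x. x ^ i) ` A) \<subseteq> range (\<lambda>c. monomial_comb c A :: 'a \<Rightarrow> 'a)"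
    by (intro fs.span_minimal) auto
next
  show "range (\<lambda>c. monomial_comb c A :: 'a \<Rightarrow> 'a) \<subseteq> fs.span ((\<lambda>i x. x ^ i) ` A)"
    unfolding monomial_comb_eq_sum by (auto intro!: fs.span_sum fs.span_scale intro: fs.span_base)
qed

lemma poly_eq_0_if_vanishes:
  fixes p :: "'a::{finite,field} poly"
  assumes "degree p < card (UNIV :: 'a set)" and "\<And>x. poly p x = 0"
  shows "p = 0"
proof (rule ccontr)
  assume "p \<noteq> 0"
  then have "card {x. poly p x = 0} \<le> degree p"
    by (rule card_poly_roots_bound)
  with assms show False
    by simp
qed

lemma monomial_comb_eq_0_imp_coeff_eq_0:
  fixes c :: "nat \<Rightarrow> 'a::{finite,field}"
  assumes "A \<subseteq> {..<card (UNIV :: 'a set)}" and "monomial_comb c A = 0" and "i \<in> A"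
  shows "c i = 0"
proof -
  define p where "p = (\<Sum>k\<in>A. monom (c k) k)"
  have fin: "finite A"
    using assms(1) finite_subset by blast
  have coeff_p: "coeff p n = (if n \<in> A then c n else 0)" for n
    using fin by (simp add: p_def coeff_sum coeff_monom if_distrib cong: if_cong)
  have "degree p \<le> card (UNIV :: 'a set) - 1"
    using assms(1) by (intro degree_le) (auto simp: coeff_p)
  moreover have "poly p x = 0" for x
    using assms(2) by (simp add: p_def poly_sum poly_monom monomial_comb_def fun_eq_iff)
  ultimately have "p = 0"
    using two_le_CARD_field[where 'a='a] by (intro poly_eq_0_if_vanishes) auto
  then show ?thesis
    using coeff_p[of i] assms(3) by simp
qed

lemma inj_on_monomials: "inj_on (\<lambda>i (x::'a::{finite,field}). x ^ i) {..<card (UNIV :: 'a set)}"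
proof (rule inj_onI, rule ccontr)
  fix i j assume ij: "i \<in> {..<card (UNIV :: 'a set)}" "j \<in> {..<card (UNIV :: 'a set)}"
    and eq: "(\<lambda>x::'a. x ^ i) = (\<lambda>x. x ^ j)" and "i \<noteq> j"
  define c :: "nat \<Rightarrow> 'a" where "c k = (if k = i then 1 else -1)" for k
  have "monomial_comb c {i, j} = 0"
    using eq \<open>i \<noteq> j\<close> by (simp add: monomial_comb_def c_def fun_eq_iff)
  then have "c i = 0"
    using ij by (intro monomial_comb_eq_0_imp_coeff_eq_0[of "{i, j}"]) auto
  then show False
    by (simp add: c_def)
qed

lemma independent_monomials:
  assumes "A \<subseteq> {..<card (UNIV :: 'a::{finite,field} set)}"
  shows "fs.independent ((\<lambda>i (x::'a). x ^ i) ` A)"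
proof
  let ?m = "\<lambda>i (x::'a). x ^ i"
  have inj: "inj_on ?m A"
    using inj_on_monomials inj_on_subset assms by blast
  assume "fs.dependent (?m ` A)"
  then obtain u j where j: "j \<in> A" "u (?m j) \<noteq> 0" and "(\<Sum>v\<in>?m ` A. fscale (u v) v) = 0"
    using fs.dependent_finite[of "?m ` A"] finite_subset[OF assms] by blast
  then have "monomial_comb (u \<circ> ?m) A = 0"
    by (simp add: monomial_comb_eq_sum sum.reindex[OF inj])
  then have "(u \<circ> ?m) j = 0"
    by (rule monomial_comb_eq_0_imp_coeff_eq_0[OF assms _ j(1)])
  with j(2) show False
    by simp
qed

lemma dim_span_monomials:
  assumes "A \<subseteq> {..<card (UNIV :: 'a::{finite,field} set)}"
  shows "fs.dim (fs.span ((\<lambda>i (x::'a). x ^ i) ` A)) = card A"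
  using fs.dim_span_eq_card_independent[OF independent_monomials[OF assms]]
    card_image[OF inj_on_subset[OF inj_on_monomials assms]] by simp

lemma herm_dual_span: "herm_dual q (fs.span B) = herm_dual q (B :: ('a::{finite,field} \<Rightarrow> 'a) set)"
proof
  show "herm_dual q (fs.span B) \<subseteq> herm_dual q B"
    unfolding herm_dual_def using fs.span_base by blast
next
  show "herm_dual q B \<subseteq> herm_dual q (fs.span B)"
  proof
    fix y assume y: "y \<in> herm_dual q B"
    have "fs.subspace {x. herm_ip q x y = 0}"
      by (simp add: fs.subspace_def herm_ip_def fscale_def sum.distrib algebra_simps
          flip: sum_distrib_left)
    then have "fs.span B \<subseteq> {x. herm_ip q x y = 0}"
      using y by (intro fs.span_minimal) (auto simp: herm_dual_def)
    then show "y \<in> herm_dual q (fs.span B)"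
      by (auto simp: herm_dual_def)
  qed
qed

lemma subspace_herm_dual:
  assumes "q = CHAR('a::{finite,field}) ^ n"
  shows "fs.subspace (herm_dual q (E :: ('a \<Rightarrow> 'a) set))"
proof -
  have frob: "(a + b) ^ q = a ^ q + b ^ q" for a b :: 'a
    using freshmans_dream'[OF prime_CHAR_finite_field assms] .
  have "0 < q"
    using assms prime_CHAR_finite_field[where 'a='a] by (simp add: prime_gt_0_nat)
  then have "herm_ip q x (y + z) = herm_ip q x y + herm_ip q x z"
    and "herm_ip q x (fscale c y) = c ^ q * herm_ip q x y"
    and "herm_ip q x 0 = 0" for x y z and c :: 'a
    by (simp_all add: herm_ip_def fscale_def frob power_mult_distrib distrib_left sum.distrib power_0_left
        sum_distrib_left mult.left_commute)
  then show ?thesis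
    by (simp add: fs.subspace_def herm_dual_def)
qed

lemma sum_poly_eq_0:
  fixes p :: "'a::{finite,field} poly"
  assumes "degree p < card (UNIV :: 'a set) - 1"
  shows "(\<Sum>x\<in>UNIV. poly p x) = 0"
proof -
  have "(\<Sum>x\<in>UNIV. poly p x) = (\<Sum>i\<le>degree p. coeff p i * (\<Sum>x\<in>UNIV. x ^ i))"
    by (simp add: poly_altdef sum_distrib_left sum.swap[of _ UNIV])
  also have "\<dots> = 0"
    using assms by (intro sum.neutral) (auto simp: sum_powers_less)
  finally show ?thesis .
qed

lemma poly_in_span_monomials:
  assumes "degree p \<le> t"
  shows "poly p \<in> fs.span ((\<lambda>i (x::'a::field). x ^ i) ` {0..t})"
proof -
  have "poly p = monomial_comb (coeff p) {0..t}"
    using assms by (auto simp: fun_eq_iff monomial_comb_def poly_altdef coeff_eq_0 le_degree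
        intro!: sum.mono_neutral_left)
  then show ?thesis
    by (simp add: span_monomials)
qed

lemma exists_poly_with_roots:
  assumes "finite Z"
  obtains p :: "'a::idom poly"
  where "degree p \<le> card Z" and "\<And>x. poly p x = 0 \<longleftrightarrow> x \<in> Z"
proof
  let ?p = "\<Prod>z\<in>Z. [:-z, 1:]"
  have "degree ?p \<le> sum (degree \<circ> (\<lambda>z. [:-z, 1:])) Z"
    by (rule degree_prod_sum_le[OF assms])
  then show "degree ?p \<le> card Z"
    by simp
  show "poly ?p x = 0 \<longleftrightarrow> x \<in> Z" for x
    using assms by (simp add: poly_prod)
qed

lemma hamming_wt_herm_dual_ge:
  fixes y :: "'a::{finite,field} \<Rightarrow> 'a"
  assumes "0 < q" and y: "y \<in> herm_dual q (fs.span ((\<lambda>i x. x ^ i) ` {0..t}))" "y \<noteq> 0"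
  shows "t + 2 \<le> hamming_wt y"
proof (rule ccontr)
  define Z where "Z = {x. y x \<noteq> 0}"
  assume "\<not> t + 2 \<le> hamming_wt y"
  then have "card Z \<le> t + 1"
    by (simp add: hamming_wt_def Z_def)
  obtain a where a: "y a \<noteq> 0"
    using y(2) by (auto simp: fun_eq_iff)
  then have "card (Z - {a}) \<le> t"
    using \<open>card Z \<le> t + 1\<close> by (simp add: Z_def card_Diff_singleton)
  obtain f :: "'a poly" where deg: "degree f \<le> card (Z - {a})"
    and roots: "\<And>x. poly f x = 0 \<longleftrightarrow> x \<in> Z - {a}"
    using exists_poly_with_roots[of "Z - {a}"] by auto
  have "poly f \<in> fs.span ((\<lambda>i x. x ^ i) ` {0..t})"
    using deg \<open>card (Z - {a}) \<le> t\<close> by (intro poly_in_span_monomials) simp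
  with y(1) have "herm_ip q (poly f) y = 0"
    by (simp add: herm_dual_def)
  moreover have "herm_ip q (poly f) y = poly f a * y a ^ q"
  proof -
    have "poly f x * y x ^ q = 0" if "x \<noteq> a" for x
      using that roots[of x] \<open>0 < q\<close> by (cases "y x = 0") (auto simp: Z_def)
    then have "(\<Sum>x\<in>UNIV - {a}. poly f x * y x ^ q) = 0"
      by (intro sum.neutral) auto
    then show ?thesis
      unfolding herm_ip_def by (simp add: sum.remove[of UNIV a])
  qed
  moreover have "poly f a \<noteq> 0"
    using roots by simp
  ultimately show False
    using a by simp
qed

lemma exists_herm_dual_weight:
  assumes card: "card (UNIV :: 'a::{finite,field} set) = q ^ 2" and t: "t \<le> q ^ 2 - 2"
  obtains y :: "'a::{finite,field} \<Rightarrow> 'a"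
  where "y \<in> herm_dual q (fs.span ((\<lambda>i x. x ^ i) ` {0..t}))" "y \<noteq> 0" "hamming_wt y = t + 2"
proof -
  let ?N = "card (UNIV :: 'a set)"
  have N: "2 \<le> ?N"
    by (rule two_le_CARD_field)
  obtain W :: "'a set" where W: "card W = ?N - 2 - t"
    using obtain_subset_with_card_n[of "?N - 2 - t" "UNIV :: 'a set"] by auto
  obtain g :: "'a poly"
    where deg: "degree g \<le> card W" and roots: "\<And>x. poly g x = 0 \<longleftrightarrow> x \<in> W"
    using exists_poly_with_roots[of W] by auto
  \<comment> \<open>Since g(x)^(q^2) = g(x), the product of x^j with y is the power sum of x^j g(x).\<close>
  define y where "y x = poly g x ^ q" for x
  have "0 < q"
    using card N by (cases q) auto
  then have supp: "{x. y x \<noteq> 0} = UNIV - W"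
    using roots by (auto simp: y_def)
  have "herm_ip q (\<lambda>x. x ^ j) y = 0" if "j \<le> t" for j
  proof -
    have "herm_ip q (\<lambda>x. x ^ j) y = (\<Sum>x\<in>UNIV. poly (monom 1 j * g) x)"
      using power_CARD[where 'a='a] card
      by (simp add: herm_ip_def y_def poly_monom power2_eq_square flip: power_mult)
    also have "\<dots> = 0"
    proof (rule sum_poly_eq_0)
      have "degree (monom 1 j * g) \<le> degree (monom (1::'a) j) + degree g"
        by (rule degree_mult_le)
      then have "degree (monom 1 j * g) \<le> j + degree g"
        by (simp add: degree_monom_eq)
      then show "degree (monom 1 j * g) < ?N - 1"
        using that deg W t card N by linarith
    qed
    finally show ?thesis .
  qed
  then have "y \<in> herm_dual q (fs.span ((\<lambda>i x. x ^ i) ` {0..t}))"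
    unfolding herm_dual_span by (auto simp: herm_dual_def)
  moreover have "hamming_wt y = t + 2"
    using W t card N by (simp add: hamming_wt_def supp card_Diff_subset)
  moreover have "y \<noteq> 0"
  proof
    assume "y = 0"
    then have "W = UNIV"
      using supp by auto
    with W N show False
      by simp
  qed
  ultimately show ?thesis
    using that by blast
qed

lemma min_dist_herm_dual:
  assumes "card (UNIV :: 'a::{finite,field} set) = q ^ 2" and "t \<le> q ^ 2 - 2"
  shows "min_dist (herm_dual q (fs.span ((\<lambda>i (x::'a). x ^ i) ` {0..t}))) = t + 2"
proof -
  let ?C = "herm_dual q (fs.span ((\<lambda>i (x::'a). x ^ i) ` {0..t}))"
  obtain y where "y \<in> ?C" "y \<noteq> 0" "hamming_wt y = t + 2"
    using exists_herm_dual_weight[OF assms] .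
  moreover have "0 < q"
    using assms(1) two_le_CARD_field[where 'a='a] by (cases q) auto
  ultimately show ?thesis
    unfolding min_dist_def using hamming_wt_herm_dual_ge
    by (intro Min_eqI) (auto intro: rev_image_eqI)
qed

text \<open>Multiplying an exponent by q, as the Hermitian product does, acts modulo q^2 - 1
  as this swap of the two base-q digits.\<close>
definition digit_swap :: "nat \<Rightarrow> nat \<Rightarrow> nat" where
  "digit_swap q i = (i mod q) * q + i div q"

lemma digit_swap_digits:
  assumes "a0 < q" and "a1 < q"
  shows "digit_swap q (a0 + a1 * q) = a1 + a0 * q"
  using assms by (simp add: digit_swap_def)

lemma digit_swap_less:
  assumes "i < q ^ 2"
  shows "digit_swap q i < q ^ 2"
proof -
  have "0 < q"
    using assms by (cases q) auto
  then have "i mod q + 1 \<le> q" and "i div q < q"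
    using assms by (auto simp: power2_eq_square less_mult_imp_div_less Suc_leI)
  then have "(i mod q) * q + i div q < (i mod q + 1) * q" and "(i mod q + 1) * q \<le> q * q"
    by (simp_all only: mult_le_mono1) simp
  then show ?thesis
    by (simp add: digit_swap_def power2_eq_square)
qed

lemma digit_swap_digit_swap:
  assumes "i < q ^ 2"
  shows "digit_swap q (digit_swap q i) = i"
proof -
  have "i div q < q"
    using assms by (simp add: power2_eq_square less_mult_imp_div_less)
  then show ?thesis
    by (simp add: digit_swap_def)
qed

lemma mult_eq_digit_swap_plus:
  "i * q = digit_swap q i + (i div q) * (q ^ 2 - 1)"
proof (cases "q = 0")
  case False
  then obtain m where m: "q ^ 2 = Suc m"
    by (cases "q ^ 2") auto
  define a0 a1 where "a0 = i mod q" and "a1 = i div q"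
  have "i * q = (a0 + a1 * q) * q"
    by (simp add: a0_def a1_def)
  also have "\<dots> = a0 * q + a1 * q ^ 2"
    by (simp add: algebra_simps power2_eq_square)
  finally show ?thesis
    by (simp add: digit_swap_def m a0_def a1_def)
qed (simp add: digit_swap_def)

lemma digit_swap_eq_0_iff: "0 < q \<Longrightarrow> digit_swap q i = 0 \<longleftrightarrow> i = 0"
  using div_mult_mod_eq[of i q] by (auto simp: digit_swap_def)

lemma sum_powers_digit_swap:
  assumes card: "card (UNIV :: 'a::{finite,field} set) = q ^ 2"
    and i: "i < q ^ 2" and j: "j < q ^ 2 - 1"
  shows "(\<Sum>x\<in>UNIV. (x::'a) ^ (j + i * q)) = (if j + digit_swap q i = q ^ 2 - 1 then -1 else 0)"
proof (cases "j + digit_swap q i = 0")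
  case True
  have "0 < q"
    using i by (cases q) auto
  with True have "j + i * q = 0"
    by (simp add: digit_swap_eq_0_iff)
  then show ?thesis
    using True sum_powers_less[where 'a='a and k=0] two_le_CARD_field[where 'a='a] card by auto
next
  case False
  have "x ^ (j + i * q) = x ^ (j + digit_swap q i)" for x :: 'a
    using power_add_mult_CARD_minus_one[of "j + digit_swap q i" x "i div q"] False card
    by (simp add: mult_eq_digit_swap_plus[of i q] add.assoc)
  moreover have "j + digit_swap q i < 2 * (card (UNIV :: 'a set) - 1)"
    using digit_swap_less[OF i] j card by linarith
  ultimately show ?thesis
    using card by (simp add: sum_powers_less)
qed

lemma herm_ip_monomial_comb:
  assumes "q = CHAR('a::{finite,field}) ^ n" and "finite A"
  shows "herm_ip q (\<lambda>x::'a. x ^ j) (monomial_comb c A) =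
    (\<Sum>i\<in>A. c i ^ q * (\<Sum>x\<in>UNIV. x ^ (j + i * q)))"
  using assms
  by (simp add: herm_ip_def monomial_comb_def freshmans_dream_sum'[OF prime_CHAR_finite_field]
      power_mult_distrib power_add sum_distrib_left sum_distrib_right mult_ac sum.swap[of _ UNIV]
      flip: power_mult)

lemma monomial_in_herm_dual:
  assumes card: "card (UNIV :: 'a::{finite,field} set) = q ^ 2"
    and i: "digit_swap q i + t < q ^ 2 - 1" "i < q ^ 2"
  shows "(\<lambda>x::'a. x ^ i) \<in> herm_dual q (fs.span ((\<lambda>i x. x ^ i) ` {0..t}))"
proof -
  have "herm_ip q (\<lambda>x::'a. x ^ j) (\<lambda>x. x ^ i) = 0" if "j \<le> t" for j
  proof -
    have "herm_ip q (\<lambda>x::'a. x ^ j) (\<lambda>x. x ^ i) = (\<Sum>x\<in>UNIV. (x::'a) ^ (j + i * q))"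
      by (simp add: herm_ip_def power_add power_mult)
    then show ?thesis
      using that i by (simp add: sum_powers_digit_swap[OF card])
  qed
  then show ?thesis
    unfolding herm_dual_span by (auto simp: herm_dual_def)
qed

lemma coeff_eq_0_if_monomial_comb_in_herm_dual:
  assumes card: "card (UNIV :: 'a::{finite,field} set) = q ^ 2" and q: "q = CHAR('a) ^ n"
    and t: "t \<le> q ^ 2 - 2"
    and in_dual: "monomial_comb c {0..t} \<in> herm_dual q (fs.span ((\<lambda>i (x::'a). x ^ i) ` {0..t}))"
    and i0: "i0 \<le> t" "q ^ 2 - 1 \<le> digit_swap q i0 + t"
  shows "c i0 = 0"
proof -
  have "0 < q"
    using card two_le_CARD_field[where 'a='a] by (cases q) auto
  have less: "i < q ^ 2" if "i \<le> t" for i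
    using that t card two_le_CARD_field[where 'a='a] by linarith
  define j where "j = q ^ 2 - 1 - digit_swap q i0"
  have j: "j \<le> t"
    using i0 unfolding j_def by linarith
  have hit: "j + digit_swap q i = q ^ 2 - 1 \<longleftrightarrow> i = i0" if "i \<le> t" for i
  proof
    assume "j + digit_swap q i = q ^ 2 - 1"
    then have "digit_swap q i = digit_swap q i0"
      using digit_swap_less[OF less[OF i0(1)]] unfolding j_def by linarith
    then show "i = i0"
      by (metis digit_swap_digit_swap less that i0(1))
  next
    assume "i = i0"
    then show "j + digit_swap q i = q ^ 2 - 1"
      using digit_swap_less[OF less[OF i0(1)]] unfolding j_def by simp
  qed
  have "(\<lambda>x::'a. x ^ j) \<in> fs.span ((\<lambda>i x. x ^ i) ` {0..t})"
    using j by (intro fs.span_base) auto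
  with in_dual have "herm_ip q (\<lambda>x::'a. x ^ j) (monomial_comb c {0..t}) = 0"
    by (simp add: herm_dual_def)
  then have "(\<Sum>i\<in>{0..t}. c i ^ q * (\<Sum>x\<in>UNIV. (x::'a) ^ (j + i * q))) = 0"
    by (simp add: herm_ip_monomial_comb[OF q])
  moreover have "j < q ^ 2 - 1"
    using j t card two_le_CARD_field[where 'a='a] by linarith
  ultimately have "(\<Sum>i\<in>{0..t}. c i ^ q * (if j + digit_swap q i = q ^ 2 - 1 then -1 else 0)) = 0"
    using less by (simp add: sum_powers_digit_swap[OF card])
  also have "(\<Sum>i\<in>{0..t}. c i ^ q * (if j + digit_swap q i = q ^ 2 - 1 then -1 else 0)) =
      (\<Sum>i\<in>{0..t}. if i = i0 then - (c i ^ q) else 0)"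
    using hit by (intro sum.cong) auto
  finally show ?thesis
    using i0(1) \<open>0 < q\<close> by simp
qed

lemma hull_monomials:
  assumes card: "card (UNIV :: 'a::{finite,field} set) = q ^ 2" and q: "q = CHAR('a) ^ n"
    and t: "t \<le> q ^ 2 - 2"
  shows "fs.span ((\<lambda>i (x::'a). x ^ i) ` {0..t}) \<inter>
      herm_dual q (fs.span ((\<lambda>i x. x ^ i) ` {0..t})) =
    fs.span ((\<lambda>i x. x ^ i) ` {i\<in>{0..t}. digit_swap q i + t < q ^ 2 - 1})"
    (is "?E \<inter> ?C = fs.span (_ ` ?S)")
proof
  show "?E \<inter> ?C \<subseteq> fs.span ((\<lambda>i x. x ^ i) ` ?S)"
  proof
    fix x assume x: "x \<in> ?E \<inter> ?C"
    then obtain c where c: "x = monomial_comb c {0..t}"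
      by (auto simp: span_monomials)
    have vanish: "c i = 0" if "i \<in> {0..t} - ?S" for i
      using x that coeff_eq_0_if_monomial_comb_in_herm_dual[OF card q t] c by auto
    have "x = monomial_comb c ?S"
      unfolding c monomial_comb_def
    proof (rule ext, rule sum.mono_neutral_right)
      show "\<forall>i\<in>{0..t} - ?S. c i * y ^ i = 0" for y
        using vanish by simp
    qed auto
    then show "x \<in> fs.span ((\<lambda>i x. x ^ i) ` ?S)"
      by (simp add: span_monomials)
  qed
next
  have "q ^ 2 - 2 < q ^ 2"
    using card two_le_CARD_field[where 'a='a] by linarith
  then have "(\<lambda>i x. x ^ i) ` ?S \<subseteq> ?C"
    using t by (auto intro!: monomial_in_herm_dual[OF card])
  then have "fs.span ((\<lambda>i x. x ^ i) ` ?S) \<subseteq> ?C"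
    by (intro fs.span_minimal subspace_herm_dual[OF q])
  moreover have "fs.span ((\<lambda>i x. x ^ i) ` ?S) \<subseteq> ?E"
    by (intro fs.span_mono) auto
  ultimately show "fs.span ((\<lambda>i x. x ^ i) ` ?S) \<subseteq> ?E \<inter> ?C"
    by blast
qed

lemma code_dim_D_code:
  assumes "t < card (UNIV :: 'a::{finite,field} set)"
  shows "code_dim (D_code {0..t} :: ('a \<Rightarrow> 'a) set) = t + 1"
  unfolding code_dim_def D_code_def by (subst dim_span_monomials) (use assms in auto)

lemma code_dim_minus_code_dim_hull:
  assumes card: "card (UNIV :: 'a::{finite,field} set) = q ^ 2" and q: "q = CHAR('a) ^ n"
    and t: "t \<le> q ^ 2 - 2"
  shows "code_dim (D_code {0..t} :: ('a \<Rightarrow> 'a) set) -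
      code_dim (D_code {0..t} \<inter> herm_dual q (D_code {0..t} :: ('a \<Rightarrow> 'a) set)) =
    card {i\<in>{0..t}. q ^ 2 - 1 \<le> digit_swap q i + t}"
proof -
  let ?S = "{i\<in>{0..t}. digit_swap q i + t < q ^ 2 - 1}"
  have sub: "{0..t} \<subseteq> {..<card (UNIV :: 'a set)}"
    using card t two_le_CARD_field[where 'a='a] by auto
  have "code_dim (D_code {0..t} :: ('a \<Rightarrow> 'a) set) = card {0..t}"
    using card t two_le_CARD_field[where 'a='a] by (simp add: code_dim_D_code)
  moreover have
    "code_dim (D_code {0..t} \<inter> herm_dual q (D_code {0..t} :: ('a \<Rightarrow> 'a) set)) = card ?S"
    unfolding code_dim_def D_code_def hull_monomials[OF card q t]
    by (rule dim_span_monomials) (use sub in auto)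
  moreover have "card ?S + card {i\<in>{0..t}. q ^ 2 - 1 \<le> digit_swap q i + t} =
      card (?S \<union> {i\<in>{0..t}. q ^ 2 - 1 \<le> digit_swap q i + t})"
    by (rule card_Un_disjoint[symmetric]) auto
  moreover have "?S \<union> {i\<in>{0..t}. q ^ 2 - 1 \<le> digit_swap q i + t} = {0..t}"
    by auto
  ultimately show ?thesis
    by simp
qed

lemma eaqecc_params_D_code:
  assumes card: "card (UNIV :: 'a::{finite,field} set) = q ^ 2" and q: "q = CHAR('a) ^ n"
    and t: "t \<le> q ^ 2 - 2"
  defines "c \<equiv> card {i\<in>{0..t}. q ^ 2 - 1 \<le> digit_swap q i + t}"
  shows "eaqecc_params q (D_code {0..t} :: ('a \<Rightarrow> 'a) set) =
    (q ^ 2, int (q ^ 2) - 2 * int (t + 1) + int c, t + 2, c)"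
proof -
  have "code_dim (D_code {0..t} :: ('a \<Rightarrow> 'a) set) = t + 1"
    using card t two_le_CARD_field[where 'a='a] by (intro code_dim_D_code) simp
  moreover have "min_dist (herm_dual q (D_code {0..t} :: ('a \<Rightarrow> 'a) set)) = t + 2"
    unfolding D_code_def using min_dist_herm_dual[OF card t] .
  ultimately show ?thesis
    using code_dim_minus_code_dim_hull[OF card q t]
    by (simp add: eaqecc_params_def Let_def card c_def)
qed

lemma add_mult_le_add_mult_iff:
  fixes q x0 x1 y0 y1 :: nat
  assumes "x0 < q" and "y0 < q"
  shows "x0 + x1 * q \<le> y0 + y1 * q \<longleftrightarrow> x1 < y1 \<or> (x1 = y1 \<and> x0 \<le> y0)"
proof -
  have less: "x0 + x1 * q < y0 + y1 * q" if "x0 < q" "x1 < y1" for x0 x1 y0 y1 :: nat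
  proof -
    have "x0 + x1 * q < (x1 + 1) * q"
      using that by simp
    also have "\<dots> \<le> y1 * q"
      using that by (intro mult_le_mono1) simp
    finally show ?thesis
      by simp
  qed
  consider "x1 < y1" | "x1 = y1" | "y1 < x1"
    by linarith
  then show ?thesis
    by cases (use less[of x0 x1 y1 y0] less[of y0 y1 x1 x0] assms in auto)
qed

definition digit_window :: "nat \<Rightarrow> nat \<Rightarrow> nat \<Rightarrow> (nat \<times> nat) set" where
  "digit_window q b0 b1 = {(a1, a0). a0 < q \<and> a1 < q \<and> (a1 < b1 \<or> a1 = b1 \<and> a0 \<le> b0) \<and>
    (q - 1 - b1 < a0 \<or> a0 = q - 1 - b1 \<and> q - 1 - b0 \<le> a1)}"

lemma digits_in_window_iff:
  fixes q a0 a1 b0 b1 :: nat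
  assumes a: "a0 < q" "a1 < q" and b: "b0 < q" "b1 < q"
  shows "a0 + a1 * q \<le> b0 + b1 * q \<and>
      q ^ 2 - 1 \<le> digit_swap q (a0 + a1 * q) + (b0 + b1 * q) \<longleftrightarrow>
    (a1, a0) \<in> digit_window q b0 b1"
proof -
  have "(q - 1 - b1) * q + b1 * q = (q - 1) * q"
    using b by (simp flip: add_mult_distrib)
  then have "(q - 1 - b0) + (q - 1 - b1) * q + (b0 + b1 * q) = (q - 1) + (q - 1) * q"
    using b by linarith
  also have "\<dots> = q ^ 2 - 1"
    using b by (cases q) (auto simp: power2_eq_square)
  finally have window: "(q - 1 - b0) + (q - 1 - b1) * q + (b0 + b1 * q) = q ^ 2 - 1" .
  have "q ^ 2 - 1 \<le> digit_swap q (a0 + a1 * q) + (b0 + b1 * q) \<longleftrightarrow>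
      (q - 1 - b0) + (q - 1 - b1) * q \<le> a1 + a0 * q"
    unfolding window[symmetric] using a by (simp add: digit_swap_digits)
  moreover have "(q - 1 - b0) + (q - 1 - b1) * q \<le> a1 + a0 * q \<longleftrightarrow>
      q - 1 - b1 < a0 \<or> (q - 1 - b1 = a0 \<and> q - 1 - b0 \<le> a1)"
    by (rule add_mult_le_add_mult_iff) (use a in auto)
  moreover have "a0 + a1 * q \<le> b0 + b1 * q \<longleftrightarrow> a1 < b1 \<or> (a1 = b1 \<and> a0 \<le> b0)"
    by (rule add_mult_le_add_mult_iff) (use a b in auto)
  ultimately show ?thesis
    using a by (auto simp: digit_window_def)
qed

lemma card_digit_window:
  fixes q b0 b1 :: nat
  assumes b: "b0 < q" "b1 < q"
  shows "card (digit_window q b0 b1) =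
    b1 ^ 2 + 2 * (b0 + b1 + 1 - q) + (if q - 1 \<le> b0 + b1 then 1 else 0)"
proof -
  let ?R1 = "{..<b1} \<times> {q - b1..<q}"
  let ?R2 = "{q - 1 - b0..<b1} \<times> {q - 1 - b1}"
  let ?R3 = "{b1} \<times> {q - b1..b0}"
  let ?R4 = "if q - 1 \<le> b0 + b1 then {(b1, q - 1 - b1)} else {}"
  have "digit_window q b0 b1 = ?R1 \<union> ?R2 \<union> ?R3 \<union> ?R4"
    using b by (auto simp: digit_window_def)
  moreover have "card (?R1 \<union> ?R2 \<union> ?R3 \<union> ?R4) = card ?R1 + card ?R2 + card ?R3 + card ?R4"
    using b by (subst card_Un_disjoint; auto)+
  moreover have "card ?R1 = b1 ^ 2" and "card ?R2 = b0 + b1 + 1 - q" and "card ?R3 = b0 + b1 + 1 - q"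
    using b by (simp_all add: power2_eq_square)
  ultimately show ?thesis
    by simp
qed

lemma card_digit_swap_ge:
  fixes q t b0 b1 :: nat
  assumes b: "b0 < q" "b1 < q" and t: "t = b0 + b1 * q"
  shows "card {i\<in>{0..t}. q ^ 2 - 1 \<le> digit_swap q i + t} =
    b1 ^ 2 + 2 * (b0 + b1 + 1 - q) + (if q - 1 \<le> b0 + b1 then 1 else 0)"
proof -
  let ?W = "digit_window q b0 b1"
  let ?f = "\<lambda>(a1, a0). a0 + a1 * q"
  have "{i\<in>{0..t}. q ^ 2 - 1 \<le> digit_swap q i + t} = ?f ` ?W"
  proof (intro equalityI subsetI)
    fix i assume i: "i \<in> {i\<in>{0..t}. q ^ 2 - 1 \<le> digit_swap q i + t}"
    have "t < (b1 + 1) * q"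
      using b t by simp
    also have "\<dots> \<le> q * q"
      using b by (intro mult_le_mono1) simp
    finally have "i div q < q"
      using i by (auto simp: less_mult_imp_div_less)
    then have "(i div q, i mod q) \<in> ?W"
      using i b t digits_in_window_iff[of "i mod q" q "i div q" b0 b1] by simp
    then show "i \<in> ?f ` ?W"
      by (rule rev_image_eqI) simp
  next
    fix i assume "i \<in> ?f ` ?W"
    then obtain a0 a1 where "(a1, a0) \<in> ?W" and i: "i = a0 + a1 * q"
      by auto
    then show "i \<in> {i\<in>{0..t}. q ^ 2 - 1 \<le> digit_swap q i + t}"
      using b t digits_in_window_iff[of a0 q a1 b0 b1] by (auto simp: digit_window_def)
  qed
  moreover have "inj_on ?f ?W"
  proof (rule inj_onI)
    fix x y assume xy: "x \<in> ?W" "y \<in> ?W" "?f x = ?f y"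
    obtain x0 x1 y0 y1 where [simp]: "x = (x1, x0)" "y = (y1, y0)"
      by fastforce
    show "x = y"
      using xy add_mult_le_add_mult_iff[of x0 q y0 x1 y1] add_mult_le_add_mult_iff[of y0 q x0 y1 x1]
      by (auto simp: digit_window_def)
  qed
  ultimately show ?thesis
    using card_digit_window[OF b] by (simp add: card_image)
qed

lemma prime_power_eq_CHAR_power:
  assumes "prime_power q" and "card (UNIV :: 'a::{finite,field} set) = q ^ 2"
  obtains n where "q = CHAR('a) ^ n"
proof -
  obtain p m where p: "prime p" "q = p ^ m"
    using assms(1) by (auto simp: prime_power_def)
  have "CHAR('a) dvd p ^ (2 * m)"
    using CHAR_dvd_CARD[where 'a='a] assms(2) p(2) by (simp add: power_mult mult.commute)
  then have "CHAR('a) = p"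
    using p(1) prime_CHAR_finite_field[where 'a='a]
    by (metis prime_dvd_power primes_dvd_imp_eq)
  with p(2) show ?thesis
    using that by blast
qed

theorem mainTheorem2:
  fixes q t b0 b1 :: nat
  assumes "prime_power q"
    and "card (UNIV :: 'a::{finite,field} set) = q ^ 2"
    and "t \<le> q ^ 2 - 2"
    and "t = b0 + b1 * q" and "b0 \<le> q - 1" and "b1 \<le> q - 1"
  shows "eaqecc_params q (D_code {0..t} :: ('a \<Rightarrow> 'a) set) =
      (if b0 + b1 < q - 1
       then (q ^ 2, (int q - int b1) ^ 2 - 2 * int b0 - 2, t + 2, b1 ^ 2)
       else (q ^ 2, (int q - int b1 - 1) ^ 2, t + 2,
             nat (int (b1 ^ 2) + 2 * (int b0 + int b1 - int q) + 3)))"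
proof -
  obtain n where q: "q = CHAR('a) ^ n"
    using prime_power_eq_CHAR_power[OF assms(1,2)] .
  have "2 \<le> q ^ 2"
    using assms(2) two_le_CARD_field[where 'a='a] by simp
  then have "2 \<le> q"
    by (cases "q < 2") (auto simp: less_2_cases_iff)
  then have b: "b0 < q" "b1 < q"
    using assms(5,6) by auto
  define c where "c = b1 ^ 2 + 2 * (b0 + b1 + 1 - q) + (if q - 1 \<le> b0 + b1 then 1 else 0)"
  have params: "eaqecc_params q (D_code {0..t} :: ('a \<Rightarrow> 'a) set) =
      (q ^ 2, int (q ^ 2) - 2 * int (t + 1) + int c, t + 2, c)"
    using eaqecc_params_D_code[OF assms(2) q assms(3)] card_digit_swap_ge[OF b assms(4)]
    by (simp add: c_def)
  show ?thesis
  proof (cases "b0 + b1 < q - 1")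
    case True
    then have "c = b1 ^ 2"
      by (simp add: c_def)
    with True show ?thesis
      using params assms(4) by (simp add: power2_eq_square algebra_simps)
  next
    case False
    then have "int c = int (b1 ^ 2) + 2 * (int b0 + int b1 - int q) + 3"
      using \<open>2 \<le> q\<close> by (simp add: c_def of_nat_diff)
    with False show ?thesis
      using params assms(4) by (simp add: power2_eq_square algebra_simps flip: nat_int)
  qed
qed

end
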